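(* Let $A$ be a doubly nonnegative matrix whose largest eigenvalue $\lambda_1$ has multiplicity one, with corresponding eigenvector $x_1$. Then for any constant $r>0$, the matrix $B=A+r\,x_1x_1^T$ satisfies $B^t\ge A^t$ entry-wise for all $t\ge 0$.
   Context: A real matrix is doubly nonnegative if it is symmetric, positive semidefinite, and entry-wise nonnegative. For a positive semidefinite matrix $C=\sum_i\mu_iy_iy_i^T$ (orthonormal eigenvectors $y_i$, eigenvalues $\mu_i\ge0$) and $t>0$, $C^t=\sum_i\mu_i^ty_iy_i^T$, and $C^0=I$. *)

theory Defs
  imports "HOL-Analysis.Analysis"
begin

definition symmetric_mat :: "real^'n^'n \<Rightarrow> bool" where
  "symmetric_mat A \<longleftrightarrow> transpose A = A"

definition psd_mat :: "real^'n^'n \<Rightarrow> bool" where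
  "psd_mat A \<longleftrightarrow> symmetric_mat A \<and> (\<forall>x. 0 \<le> x \<bullet> (A *v x))"

definition entrywise_nonneg :: "real^'n^'n \<Rightarrow> bool" where
  "entrywise_nonneg A \<longleftrightarrow> (\<forall>i j. 0 \<le> A $ i $ j)"

definition doubly_nonneg :: "real^'n^'n \<Rightarrow> bool" where
  "doubly_nonneg A \<longleftrightarrow> symmetric_mat A \<and> psd_mat A \<and> entrywise_nonneg A"

definition entrywise_le :: "real^'n^'n \<Rightarrow> real^'n^'n \<Rightarrow> bool" where
  "entrywise_le A B \<longleftrightarrow> (\<forall>i j. A $ i $ j \<le> B $ i $ j)"

definition outer :: "real^'n \<Rightarrow> real^'n \<Rightarrow> real^'n^'n" where
  "outer x y = (\<chi> i j. x $ i * y $ j)"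

definition is_eigenvalue :: "real^'n^'n \<Rightarrow> real \<Rightarrow> bool" where
  "is_eigenvalue A l \<longleftrightarrow> (\<exists>v. v \<noteq> 0 \<and> A *v v = l *s v)"

definition eigenspace :: "real^'n^'n \<Rightarrow> real \<Rightarrow> (real^'n) set" where
  "eigenspace A l = {v. A *v v = l *s v}"

definition psd_spectral_decomp :: "real^'n^'n \<Rightarrow> ('n \<Rightarrow> real^'n) \<Rightarrow> ('n \<Rightarrow> real) \<Rightarrow> bool" where
  "psd_spectral_decomp C Y mu \<longleftrightarrow>
     (\<forall>i j. Y i \<bullet> Y j = (if i = j then 1 else 0)) \<and> (\<forall>i. 0 \<le> mu i) \<and>
     C = (\<Sum>i\<in>UNIV. mu i *\<^sub>R outer (Y i) (Y i))"

definition psd_rpow :: "real^'n^'n \<Rightarrow> real \<Rightarrow> real^'n^'n" where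
  "psd_rpow C t = (if t = 0 then mat 1 else
     (SOME M. \<exists>Y mu. psd_spectral_decomp C Y mu \<and>
        M = (\<Sum>i\<in>UNIV. (mu i powr t) *\<^sub>R outer (Y i) (Y i))))"

end

theory Submission
  imports Defs
begin

text \<open>
  Write \<open>A = \<Sum>\<^sub>i \<mu>\<^sub>i y\<^sub>i y\<^sub>i\<^sup>T\<close>. Because \<open>x\<^sub>1\<close> spans the simple eigenspace of \<open>\<lambda>\<^sub>1\<close>,
  every \<open>y\<^sub>i\<close> is either orthogonal or parallel to \<open>x\<^sub>1\<close>, so \<open>B\<close> has the same eigenvectors with
  eigenvalues \<open>\<mu>\<^sub>i + r (y\<^sub>i \<bullet> x\<^sub>1)\<^sup>2\<close>. Hence \<open>B\<^sup>t - A\<^sup>t\<close> only involves the \<open>y\<^sub>i\<close> with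
  \<open>\<mu>\<^sub>i = \<lambda>\<^sub>1\<close>, with nonnegative coefficients. These \<open>y\<^sub>i\<close> are multiples of \<open>|x\<^sub>1|\<close>
  (Perron--Frobenius): since \<open>A\<close> is entrywise nonnegative, \<open>|x\<^sub>1|\<close> attains the maximum
  \<open>\<lambda>\<^sub>1\<close> of the Rayleigh quotient and is therefore itself an eigenvector for \<open>\<lambda>\<^sub>1\<close>.
  So \<open>y\<^sub>i y\<^sub>i\<^sup>T \<ge> 0\<close> entrywise for these \<open>i\<close>, and \<open>B\<^sup>t \<ge> A\<^sup>t\<close>.
\<close>

abbreviation spectral_sum :: "('n::finite \<Rightarrow> real^'n) \<Rightarrow> ('n \<Rightarrow> real) \<Rightarrow> real^'n^'n" where
  "spectral_sum Y c \<equiv> \<Sum>i\<in>UNIV. c i *\<^sub>R outer (Y i) (Y i)"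

definition orthonormal_family :: "('n::finite \<Rightarrow> real^'n) \<Rightarrow> bool" where
  "orthonormal_family Y \<longleftrightarrow> (\<forall>i j. Y i \<bullet> Y j = (if i = j then 1 else 0))"

lemma psd_spectral_decomp_iff:
  "psd_spectral_decomp C Y mu \<longleftrightarrow>
     orthonormal_family Y \<and> (\<forall>i. 0 \<le> mu i) \<and> C = spectral_sum Y mu"
  by (simp add: psd_spectral_decomp_def orthonormal_family_def)

lemma symmetric_mat_inner_commute:
  assumes "symmetric_mat A"
  shows "(A *v x) \<bullet> y = x \<bullet> (A *v y)"
proof -
  have "A *v x = x v* A" using assms unfolding symmetric_mat_def
    by (metis vector_transpose_matrix)
  then show ?thesis by (simp add: dot_lmul_matrix)
qed

lemma symmetric_eigenvectors_orthogonal: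
  assumes "symmetric_mat A" "A *v x = l *\<^sub>R x" "A *v y = m *\<^sub>R y" "l \<noteq> m"
  shows "x \<bullet> y = 0"
proof -
  have "l * (x \<bullet> y) = (A *v x) \<bullet> y" by (simp add: assms(2))
  also have "\<dots> = x \<bullet> (A *v y)" using symmetric_mat_inner_commute[OF assms(1)] .
  also have "\<dots> = m * (x \<bullet> y)" by (simp add: assms(3))
  finally show ?thesis using assms(4) by simp
qed

lemma outer_mult_vec: "outer a b *v x = (b \<bullet> x) *\<^sub>R a"
  by (simp add: vec_eq_iff outer_def matrix_vector_mult_def inner_vec_def sum_distrib_left
      mult.commute mult.left_commute)

lemma sum_scaleR_matrix_mult_vec:
  fixes M :: "'i \<Rightarrow> real^'n^'m"
  shows "finite I \<Longrightarrow> (\<Sum>i\<in>I. c i *\<^sub>R M i) *v x = (\<Sum>i\<in>I. c i *\<^sub>R (M i *v x))"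
  by (induction I rule: finite_induct)
    (simp_all add: matrix_vector_mult_add_rdistrib scaleR_matrix_vector_assoc)

lemma matrix_vector_mult_sum:
  fixes A :: "real^'n^'m"
  shows "finite I \<Longrightarrow> A *v (\<Sum>i\<in>I. f i) = (\<Sum>i\<in>I. A *v f i)"
  by (induction I rule: finite_induct) (auto simp: matrix_vector_right_distrib)

lemma spectral_sum_mult_vec:
  "spectral_sum Y c *v x = (\<Sum>i\<in>UNIV. (c i * (Y i \<bullet> x)) *\<^sub>R Y i)"
  by (simp add: sum_scaleR_matrix_mult_vec outer_mult_vec)

lemma spectral_sum_entry: "spectral_sum Y c $ a $ b = (\<Sum>i\<in>UNIV. c i * (Y i $ a * Y i $ b))"
  by (simp add: sum_component outer_def)

lemma symmetric_spectral_sum: "symmetric_mat (spectral_sum Y c)"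
  unfolding symmetric_mat_def by (simp add: vec_eq_iff transpose_def outer_def mult.commute)

lemma spectral_sum_quadratic_form: "x \<bullet> (spectral_sum Y c *v x) = (\<Sum>i\<in>UNIV. c i * (Y i \<bullet> x)\<^sup>2)"
  by (simp add: spectral_sum_mult_vec inner_sum_right inner_commute power2_eq_square mult_ac)

lemma rank_one_update_eigenvector:
  assumes "A *v y = \<mu> *\<^sub>R y" and "y \<bullet> x = 0 \<or> x = (y \<bullet> x) *\<^sub>R y"
  shows "(A + r *\<^sub>R outer x x) *v y = (\<mu> + r * (y \<bullet> x)\<^sup>2) *\<^sub>R y"
  using assms(2)
proof
  assume "x = (y \<bullet> x) *\<^sub>R y"
  then have "(x \<bullet> y) *\<^sub>R x = (y \<bullet> x)\<^sup>2 *\<^sub>R y"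
    by (metis inner_commute power2_eq_square scaleR_scaleR)
  then show ?thesis
    by (simp add: assms(1) matrix_vector_mult_add_rdistrib scaleR_matrix_vector_assoc[symmetric]
        outer_mult_vec algebra_simps)
qed (simp add: assms(1) matrix_vector_mult_add_rdistrib scaleR_matrix_vector_assoc[symmetric]
      outer_mult_vec inner_commute)

lemma orthonormal_family_span:
  fixes Y :: "'n::finite \<Rightarrow> real^'n"
  assumes "orthonormal_family Y"
  shows "span (range Y) = UNIV"
proof -
  have Y: "\<And>i j. Y i \<bullet> Y j = (if i = j then 1 else 0)"
    using assms unfolding orthonormal_family_def by blast
  have "inj Y"
    by (rule injI) (metis Y zero_neq_one)
  have "0 \<notin> range Y"
    using Y by (metis image_iff inner_zero_left zero_neq_one)
  then have "independent (range Y)"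
    by (intro pairwise_orthogonal_independent) (use Y in \<open>auto simp: pairwise_def orthogonal_def\<close>)
  moreover have "card (range Y) = dim (UNIV :: (real^'n) set)"
    using \<open>inj Y\<close> by (simp add: card_image)
  ultimately show ?thesis
    using card_eq_dim[of "range Y" UNIV] by auto
qed

lemma orthonormal_family_expansion:
  assumes "orthonormal_family Y"
  shows "x = (\<Sum>i\<in>UNIV. (Y i \<bullet> x) *\<^sub>R Y i)"
proof -
  have Y: "\<And>i j. Y i \<bullet> Y j = (if i = j then 1 else 0)"
    using assms unfolding orthonormal_family_def by blast
  define z where "z = x - (\<Sum>i\<in>UNIV. (Y i \<bullet> x) *\<^sub>R Y i)"
  have "Y j \<bullet> z = 0" for j
  proof -
    have "Y j \<bullet> (\<Sum>i\<in>UNIV. (Y i \<bullet> x) *\<^sub>R Y i) = (\<Sum>i\<in>UNIV. if i = j then Y j \<bullet> x else 0)"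
      unfolding inner_sum_right by (rule sum.cong) (auto simp: Y)
    then show ?thesis by (simp add: z_def inner_diff_right)
  qed
  then have "\<And>y. y \<in> range Y \<Longrightarrow> orthogonal z y"
    by (auto simp: orthogonal_def inner_commute)
  then have "orthogonal z z"
    using orthogonal_to_span[of z "range Y" z] orthonormal_family_span[OF assms] by blast
  then show ?thesis by (simp add: z_def orthogonal_def)
qed

lemma orthonormal_family_inner_self:
  assumes "orthonormal_family Y"
  shows "x \<bullet> x = (\<Sum>i\<in>UNIV. (Y i \<bullet> x)\<^sup>2)"
proof -
  have "x \<bullet> x = x \<bullet> (\<Sum>i\<in>UNIV. (Y i \<bullet> x) *\<^sub>R Y i)"
    using orthonormal_family_expansion[OF assms] by metis
  then show ?thesis by (simp add: inner_sum_right inner_commute power2_eq_square)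
qed

lemma spectral_sum_mult_member:
  assumes "orthonormal_family Y"
  shows "spectral_sum Y c *v Y j = c j *\<^sub>R Y j"
proof -
  have "spectral_sum Y c *v Y j = (\<Sum>i\<in>UNIV. if i = j then c j *\<^sub>R Y j else 0)"
    unfolding spectral_sum_mult_vec
    by (rule sum.cong) (use assms in \<open>auto simp: orthonormal_family_def\<close>)
  then show ?thesis by simp
qed

lemma matrix_eq_spectral_sum:
  fixes M :: "real^'n^'n"
  assumes "orthonormal_family Y" and "\<And>j. M *v Y j = nu j *\<^sub>R Y j"
  shows "M = spectral_sum Y nu"
proof (subst matrix_eq, intro allI)
  fix x :: "real^'n"
  have "M *v x = M *v (\<Sum>i\<in>UNIV. (Y i \<bullet> x) *\<^sub>R Y i)"
    using orthonormal_family_expansion[OF assms(1), of x] by simp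
  also have "\<dots> = spectral_sum Y nu *v x"
    by (simp add: matrix_vector_mult_sum matrix_vector_mult_scaleR assms(2) spectral_sum_mult_vec
        mult.commute)
  finally show "M *v x = spectral_sum Y nu *v x" .
qed

lemma psd_spectral_decomp_eigenvector:
  assumes "psd_spectral_decomp A Y mu"
  shows "A *v Y i = mu i *\<^sub>R Y i" and "is_eigenvalue A (mu i)"
proof -
  have Y: "orthonormal_family Y" and A: "A = spectral_sum Y mu"
    using assms by (auto simp: psd_spectral_decomp_iff)
  then show eig: "A *v Y i = mu i *\<^sub>R Y i" by (simp add: spectral_sum_mult_member)
  have "Y i \<noteq> 0" using Y by (metis inner_zero_left orthonormal_family_def zero_neq_one)
  then show "is_eigenvalue A (mu i)"
    using eig by (auto simp: is_eigenvalue_def scalar_mult_eq_scaleR)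
qed

lemma psd_spectral_decomp_quadratic_form_le:
  assumes "psd_spectral_decomp A Y mu" and "\<And>i. mu i \<le> lam"
  shows "z \<bullet> (A *v z) \<le> lam * (z \<bullet> z)"
proof -
  have Y: "orthonormal_family Y" and A: "A = spectral_sum Y mu"
    using assms(1) by (auto simp: psd_spectral_decomp_iff)
  have "z \<bullet> (A *v z) = (\<Sum>i\<in>UNIV. mu i * (Y i \<bullet> z)\<^sup>2)"
    by (simp add: A spectral_sum_quadratic_form)
  also have "\<dots> \<le> (\<Sum>i\<in>UNIV. lam * (Y i \<bullet> z)\<^sup>2)"
    by (intro sum_mono mult_right_mono assms(2)) simp
  also have "\<dots> = lam * (z \<bullet> z)"
    by (simp add: orthonormal_family_inner_self[OF Y] sum_distrib_left)
  finally show ?thesis .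
qed

text \<open>
  This makes \<open>psd_rpow\<close> independent of the decomposition picked by \<open>SOME\<close>. The point is that
  eigenvectors of the two decompositions with different eigenvalues are orthogonal.
\<close>
lemma spectral_sum_fun_unique:
  assumes oY: "orthonormal_family Y" and oZ: "orthonormal_family Z"
    and eq: "spectral_sum Y mu = spectral_sum Z nu"
  shows "spectral_sum Y (\<lambda>i. f (mu i)) = spectral_sum Z (\<lambda>i. f (nu i))"
proof -
  let ?C = "spectral_sum Z nu"
  have eY: "?C *v Y i = mu i *\<^sub>R Y i" for i
    using spectral_sum_mult_member[OF oY] eq by metis
  have eZ: "?C *v Z j = nu j *\<^sub>R Z j" for j
    using spectral_sum_mult_member[OF oZ] .
  have key: "f (mu i) * (Y i \<bullet> Z j) = f (nu j) * (Y i \<bullet> Z j)" for i j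
    using symmetric_eigenvectors_orthogonal[OF symmetric_spectral_sum eY eZ]
    by (cases "mu i = nu j") auto
  have "spectral_sum Y (\<lambda>i. f (mu i)) *v Z j = f (nu j) *\<^sub>R Z j" for j
  proof -
    have "spectral_sum Y (\<lambda>i. f (mu i)) *v Z j = f (nu j) *\<^sub>R (\<Sum>i\<in>UNIV. (Y i \<bullet> Z j) *\<^sub>R Y i)"
      by (simp add: spectral_sum_mult_vec key scaleR_sum_right)
    then show ?thesis using orthonormal_family_expansion[OF oY, of "Z j"] by simp
  qed
  then show ?thesis by (rule matrix_eq_spectral_sum[OF oZ])
qed

subsection \<open>The spectral theorem\<close>

lemma linear_plus_quadratic_nonpos_imp_zero:
  fixes a b :: real
  assumes "\<And>s. 2 * s * a + s\<^sup>2 * b \<le> 0"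
  shows "a = 0"
proof -
  have pos: "\<bar>b\<bar> + 1 > 0" by simp
  define s where "s = a / (\<bar>b\<bar> + 1)"
  have "s * (\<bar>b\<bar> + 1) = a" using pos by (simp add: s_def)
  then have sa: "s * a = s\<^sup>2 * (\<bar>b\<bar> + 1)" by (metis mult.assoc power2_eq_square)
  have "s\<^sup>2 * b \<ge> - (s\<^sup>2 * \<bar>b\<bar>)"
    using mult_left_mono[of "-\<bar>b\<bar>" b "s\<^sup>2"] by simp
  then have "s\<^sup>2 * (\<bar>b\<bar> + 2) \<le> 0" using assms[of s] sa by (simp add: algebra_simps)
  moreover have "\<bar>b\<bar> + 2 > 0" by simp
  ultimately have "s\<^sup>2 \<le> 0" by (simp add: mult_le_0_iff)
  then have "s = 0" by simp
  then show "a = 0" using pos by (simp add: s_def)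
qed

lemma symmetric_rayleigh_maximizer_eigenvector:
  fixes A :: "real^'n^'n"
  assumes sym: "symmetric_mat A" and S: "subspace S" and inv: "\<And>x. x \<in> S \<Longrightarrow> A *v x \<in> S"
    and vS: "v \<in> S" and bound: "\<And>z. z \<in> S \<Longrightarrow> z \<bullet> (A *v z) \<le> m * (z \<bullet> z)"
    and attained: "m * (v \<bullet> v) \<le> v \<bullet> (A *v v)"
  shows "A *v v = m *\<^sub>R v"
proof -
  have orth: "w \<bullet> (A *v v) - m * (w \<bullet> v) = 0" if wS: "w \<in> S" for w
  proof (rule linear_plus_quadratic_nonpos_imp_zero[where b = "w \<bullet> (A *v w) - m * (w \<bullet> w)"])
    fix s :: real
    have "v + s *\<^sub>R w \<in> S" using vS wS S by (simp add: subspace_add subspace_scale)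
    then have b: "(v + s *\<^sub>R w) \<bullet> (A *v (v + s *\<^sub>R w)) \<le> m * ((v + s *\<^sub>R w) \<bullet> (v + s *\<^sub>R w))"
      by (rule bound)
    have vw: "v \<bullet> (A *v w) = w \<bullet> (A *v v)"
      using symmetric_mat_inner_commute[OF sym, of w v] by (simp add: inner_commute)
    have e1: "(v + s *\<^sub>R w) \<bullet> (A *v (v + s *\<^sub>R w))
        = v \<bullet> (A *v v) + 2 * s * (w \<bullet> (A *v v)) + s\<^sup>2 * (w \<bullet> (A *v w))"
      by (simp add: matrix_vector_right_distrib matrix_vector_mult_scaleR inner_add_left
          inner_add_right vw power2_eq_square algebra_simps)
    have e2: "(v + s *\<^sub>R w) \<bullet> (v + s *\<^sub>R w) = v \<bullet> v + 2 * s * (w \<bullet> v) + s\<^sup>2 * (w \<bullet> w)"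
      by (simp add: inner_add_left inner_add_right inner_commute power2_eq_square algebra_simps)
    have "2 * s * (w \<bullet> (A *v v) - m * (w \<bullet> v)) + s\<^sup>2 * (w \<bullet> (A *v w) - m * (w \<bullet> w))
        = (v \<bullet> (A *v v) + 2 * s * (w \<bullet> (A *v v)) + s\<^sup>2 * (w \<bullet> (A *v w)))
          - m * (v \<bullet> v + 2 * s * (w \<bullet> v) + s\<^sup>2 * (w \<bullet> w)) - (v \<bullet> (A *v v) - m * (v \<bullet> v))"
      by (simp add: algebra_simps)
    then show "2 * s * (w \<bullet> (A *v v) - m * (w \<bullet> v)) + s\<^sup>2 * (w \<bullet> (A *v w) - m * (w \<bullet> w)) \<le> 0"
      using b attained unfolding e1 e2 by linarith
  qed
  define w where "w = A *v v - m *\<^sub>R v"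
  have "w \<in> S" using inv vS S by (simp add: w_def subspace_diff subspace_scale)
  then have "w \<bullet> w = 0" using orth by (simp add: w_def inner_diff_right)
  then show ?thesis by (simp add: w_def)
qed

lemma symmetric_invariant_subspace_eigenvector:
  fixes A :: "real^'n^'n"
  assumes sym: "symmetric_mat A" and S: "subspace S" and inv: "\<And>x. x \<in> S \<Longrightarrow> A *v x \<in> S"
    and "y \<in> S" "y \<noteq> 0"
  obtains v m where "v \<in> S" "norm v = 1" "A *v v = m *\<^sub>R v"
proof -
  define K where "K = sphere (0::real^'n) 1 \<inter> S"
  have "compact K" unfolding K_def
    by (intro compact_Int_closed compact_sphere closed_subspace S)
  moreover have "y /\<^sub>R norm y \<in> K" using assms(4,5) S unfolding K_def
    by (simp add: subspace_scale)
  then have "K \<noteq> {}" by auto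
  moreover have "continuous_on K (\<lambda>x. x \<bullet> (A *v x))" by (intro continuous_intros)
  ultimately obtain v where vK: "v \<in> K" and vmax: "\<And>z. z \<in> K \<Longrightarrow> z \<bullet> (A *v z) \<le> v \<bullet> (A *v v)"
    using continuous_attains_sup by metis
  define m where "m = v \<bullet> (A *v v)"
  have vS: "v \<in> S" and nv: "norm v = 1" using vK by (auto simp: K_def)
  have bound: "z \<bullet> (A *v z) \<le> m * (z \<bullet> z)" if "z \<in> S" for z
  proof (cases "z = 0")
    case False
    have "z /\<^sub>R norm z \<in> K" using that False S unfolding K_def
      by (simp add: subspace_scale)
    then have "(z /\<^sub>R norm z) \<bullet> (A *v (z /\<^sub>R norm z)) \<le> m" using vmax m_def by blast
    then have "(z \<bullet> (A *v z)) / (norm z)\<^sup>2 \<le> m"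
      by (simp add: matrix_vector_mult_scaleR power2_eq_square divide_inverse mult_ac)
    then show ?thesis using False by (simp add: divide_le_eq dot_square_norm)
  qed simp
  have "v \<bullet> v = 1" using nv by (simp add: dot_square_norm)
  then have attained: "m * (v \<bullet> v) \<le> v \<bullet> (A *v v)" by (simp add: m_def)
  have "A *v v = m *\<^sub>R v"
    by (rule symmetric_rayleigh_maximizer_eigenvector[OF sym S inv vS bound attained])
  then show thesis using that vS nv by blast
qed

lemma symmetric_invariant_subspace_orthonormal_eigenbasis:
  fixes A :: "real^'n^'n"
  assumes sym: "symmetric_mat A"
  shows "subspace S \<Longrightarrow> (\<forall>x\<in>S. A *v x \<in> S) \<Longrightarrow>
    \<exists>B. B \<subseteq> S \<and> pairwise orthogonal B \<and> (\<forall>x\<in>B. norm x = 1) \<and> S \<subseteq> span B \<and>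
        (\<forall>x\<in>B. \<exists>l. A *v x = l *\<^sub>R x)"
proof (induction "dim S" arbitrary: S rule: less_induct)
  case less
  note S = less.prems(1) and inv = less.prems(2)
  show ?case
  proof (cases "S \<subseteq> {0}")
    case True
    then show ?thesis by (intro exI[of _ "{}"]) auto
  next
    case False
    then obtain y where "y \<in> S" "y \<noteq> 0" by auto
    then obtain v m where vS: "v \<in> S" and nv: "norm v = 1" and eig: "A *v v = m *\<^sub>R v"
      using symmetric_invariant_subspace_eigenvector[OF sym S] inv by metis
    have vv: "v \<bullet> v = 1" using nv by (simp add: dot_square_norm)
    define S' where "S' = {x \<in> S. v \<bullet> x = 0}"
    have S': "subspace S'" using S unfolding S'_def subspace_def
      by (auto simp: inner_add_right)
    have inv': "\<forall>x\<in>S'. A *v x \<in> S'"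
    proof
      fix x assume "x \<in> S'"
      then have "x \<in> S" and "v \<bullet> x = 0" by (auto simp: S'_def)
      have "v \<bullet> (A *v x) = (A *v v) \<bullet> x" using symmetric_mat_inner_commute[OF sym] by simp
      also have "\<dots> = 0" using \<open>v \<bullet> x = 0\<close> by (simp add: eig)
      finally show "A *v x \<in> S'" using inv \<open>x \<in> S\<close> by (simp add: S'_def)
    qed
    have "v \<notin> S'" using vv by (simp add: S'_def)
    then have "S' \<subset> S" using vS unfolding S'_def by blast
    then have "dim S' < dim S" using S S' by (metis dim_psubset span_eq_iff)
    then obtain B' where B'S: "B' \<subseteq> S'" and po: "pairwise orthogonal B'"
      and nB: "\<forall>x\<in>B'. norm x = 1" and spB: "S' \<subseteq> span B'" and eB: "\<forall>x\<in>B'. \<exists>l. A *v x = l *\<^sub>R x"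
      using less.hyps[OF _ S' inv'] by blast
    show ?thesis
    proof (intro exI[of _ "insert v B'"] conjI)
      show "insert v B' \<subseteq> S" using vS B'S by (auto simp: S'_def)
      show "pairwise orthogonal (insert v B')"
        using po B'S by (auto simp: pairwise_insert S'_def orthogonal_def inner_commute)
      show "\<forall>x\<in>insert v B'. norm x = 1" using nv nB by auto
      show "\<forall>x\<in>insert v B'. \<exists>l. A *v x = l *\<^sub>R x" using eig eB by auto
      show "S \<subseteq> span (insert v B')"
      proof
        fix x assume "x \<in> S"
        then have "x - (v \<bullet> x) *\<^sub>R v \<in> span B'"
          using vS S vv spB by (auto simp: S'_def subspace_diff subspace_scale inner_diff_right)
        then show "x \<in> span (insert v B')" using span_breakdown_eq by blast
      qed
    qed
  qed
qed

lemma symmetric_mat_orthonormal_eigenbasis: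
  fixes A :: "real^'n^'n"
  assumes "symmetric_mat A"
  shows "\<exists>Y mu. orthonormal_family Y \<and> (\<forall>i. A *v Y i = mu i *\<^sub>R Y i)"
proof -
  obtain B where po: "pairwise orthogonal B" and nB: "\<forall>x\<in>B. norm x = 1"
    and spB: "UNIV \<subseteq> span B" and eB: "\<forall>x\<in>B. \<exists>l. A *v x = l *\<^sub>R x"
    using symmetric_invariant_subspace_orthonormal_eigenbasis[OF assms, of UNIV] by auto
  have "independent B" using pairwise_orthogonal_independent[OF po] nB by force
  then have "finite B" and "card B = CARD('n)"
    using basis_card_eq_dim[of B UNIV] spB indep_card_eq_dim_span by auto
  then obtain h where bij: "bij_betw h (UNIV::'n set) B"
    using finite_same_card_bij[of "UNIV::'n set" B] by auto
  then have hB: "h i \<in> B" for i using bij_betwE by blast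
  have "orthonormal_family h"
    unfolding orthonormal_family_def
  proof (intro allI)
    fix i j
    show "h i \<bullet> h j = (if i = j then 1 else 0)"
    proof (cases "i = j")
      case False
      then have "h i \<noteq> h j" using bij by (metis UNIV_I bij_betw_iff_bijections)
      then show ?thesis using po hB[of i] hB[of j] False
        by (auto simp: pairwise_def orthogonal_def)
    qed (use nB hB in \<open>simp add: dot_square_norm\<close>)
  qed
  moreover have "\<forall>i. A *v h i = (SOME l. A *v h i = l *\<^sub>R h i) *\<^sub>R h i"
    using eB hB by (metis (mono_tags) someI_ex)
  ultimately show ?thesis
    by (intro exI[of _ h] exI[of _ "\<lambda>i. SOME l. A *v h i = l *\<^sub>R h i"] conjI)
qed

lemma psd_mat_spectral_decomp:
  fixes A :: "real^'n^'n"
  assumes "psd_mat A"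
  obtains Y mu where "psd_spectral_decomp A Y mu"
proof -
  have "symmetric_mat A" using assms by (simp add: psd_mat_def)
  then obtain Y mu where Y: "orthonormal_family Y" and eig: "\<And>i. A *v Y i = mu i *\<^sub>R Y i"
    using symmetric_mat_orthonormal_eigenbasis by blast
  have "0 \<le> mu i" for i
  proof -
    have "0 \<le> Y i \<bullet> (A *v Y i)" using assms by (simp add: psd_mat_def)
    then show ?thesis using eig Y by (simp add: orthonormal_family_def)
  qed
  then have "psd_spectral_decomp A Y mu"
    using Y matrix_eq_spectral_sum[OF Y eig] by (simp add: psd_spectral_decomp_iff)
  then show thesis by (rule that)
qed

subsection \<open>Real powers of positive semidefinite matrices\<close>

lemma psd_rpow_spectral_sum:
  assumes "t \<noteq> 0" and "psd_spectral_decomp C Y mu"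
  shows "psd_rpow C t = spectral_sum Y (\<lambda>i. mu i powr t)"
proof -
  let ?P = "\<lambda>M. \<exists>Y mu. psd_spectral_decomp C Y mu \<and> M = spectral_sum Y (\<lambda>i. mu i powr t)"
  obtain Y' mu' where d': "psd_spectral_decomp C Y' mu'"
    and M: "(SOME M. ?P M) = spectral_sum Y' (\<lambda>i. mu' i powr t)"
    using someI_ex[of ?P] assms(2) by blast
  have "spectral_sum Y' (\<lambda>i. mu' i powr t) = spectral_sum Y (\<lambda>i. mu i powr t)"
    using spectral_sum_fun_unique[of Y' Y mu' mu] d' assms(2)
    by (auto simp: psd_spectral_decomp_iff)
  then show ?thesis using assms(1) M by (simp add: psd_rpow_def)
qed

lemma psd_rpow_entrywise_mono:
  assumes dA: "psd_spectral_decomp A Y mu" and dB: "psd_spectral_decomp B Y nu" and "0 < t"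
    and cmp: "\<And>i. mu i = nu i \<or> (mu i \<le> nu i \<and> (\<forall>a b. 0 \<le> Y i $ a * Y i $ b))"
  shows "entrywise_le (psd_rpow A t) (psd_rpow B t)"
proof -
  have "t \<noteq> 0" using \<open>0 < t\<close> by simp
  have "psd_rpow A t $ a $ b \<le> psd_rpow B t $ a $ b" for a b
    unfolding psd_rpow_spectral_sum[OF \<open>t \<noteq> 0\<close> dA] psd_rpow_spectral_sum[OF \<open>t \<noteq> 0\<close> dB]
      spectral_sum_entry
  proof (rule sum_mono)
    fix i
    have "0 \<le> mu i" using dA by (simp add: psd_spectral_decomp_iff)
    show "mu i powr t * (Y i $ a * Y i $ b) \<le> nu i powr t * (Y i $ a * Y i $ b)"
      using cmp[of i]
    proof
      assume "mu i \<le> nu i \<and> (\<forall>a b. 0 \<le> Y i $ a * Y i $ b)"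
      with \<open>0 \<le> mu i\<close> \<open>0 < t\<close> show ?thesis by (auto intro!: mult_right_mono powr_mono2)
    qed simp
  qed
  then show ?thesis by (simp add: entrywise_le_def)
qed

subsection \<open>Perron vector and rank-one update\<close>

lemma subspace_eigenspace: "subspace (eigenspace A l)"
  unfolding subspace_def eigenspace_def
  by (simp add: matrix_vector_right_distrib matrix_vector_mult_scaleR scalar_mult_eq_scaleR
      algebra_simps)

lemma mem_eigenspace_iff: "v \<in> eigenspace A l \<longleftrightarrow> A *v v = l *\<^sub>R v"
  by (simp add: eigenspace_def scalar_mult_eq_scaleR)

lemma dim_one_subspace_parallel:
  fixes E :: "(real^'n) set"
  assumes "subspace E" "dim E = 1" "y \<in> E" "z \<in> E" "z \<noteq> 0"
  shows "\<exists>c. y = c *\<^sub>R z"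
proof -
  have "y \<in> span {z}"
  proof (rule ccontr)
    assume ns: "y \<notin> span {z}"
    then have "y \<noteq> z" using span_base by blast
    have "independent {y, z}"
      using ns \<open>y \<noteq> z\<close> assms(5) by (simp add: independent_insert)
    then have "card {y, z} \<le> dim E" using independent_card_le_dim[of "{y,z}" E] assms by blast
    then show False using \<open>y \<noteq> z\<close> assms(2) by simp
  qed
  then show ?thesis by (auto simp: span_singleton)
qed

lemma quadratic_form_le_abs:
  fixes A :: "real^'n^'n"
  assumes "entrywise_nonneg A"
  shows "x \<bullet> (A *v x) \<le> (\<chi> k. \<bar>x $ k\<bar>) \<bullet> (A *v (\<chi> k. \<bar>x $ k\<bar>))"
proof -
  have "x \<bullet> (A *v x) = (\<Sum>k\<in>UNIV. \<Sum>l\<in>UNIV. x $ k * (A $ k $ l * x $ l))"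
    by (simp add: inner_vec_def matrix_vector_mult_def sum_distrib_left)
  also have "\<dots> \<le> (\<Sum>k\<in>UNIV. \<Sum>l\<in>UNIV. \<bar>x $ k\<bar> * (A $ k $ l * \<bar>x $ l\<bar>))"
  proof (intro sum_mono)
    fix k l
    have "x $ k * (A $ k $ l * x $ l) \<le> \<bar>x $ k * (A $ k $ l * x $ l)\<bar>" by simp
    also have "\<dots> = \<bar>x $ k\<bar> * (A $ k $ l * \<bar>x $ l\<bar>)"
      using assms by (simp add: entrywise_nonneg_def abs_mult)
    finally show "x $ k * (A $ k $ l * x $ l) \<le> \<bar>x $ k\<bar> * (A $ k $ l * \<bar>x $ l\<bar>)" .
  qed
  also have "\<dots> = (\<chi> k. \<bar>x $ k\<bar>) \<bullet> (A *v (\<chi> k. \<bar>x $ k\<bar>))"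
    by (simp add: inner_vec_def matrix_vector_mult_def sum_distrib_left)
  finally show ?thesis .
qed

lemma simple_top_eigenvector_sign_constant:
  fixes A :: "real^'n^'n"
  assumes sym: "symmetric_mat A" and nn: "entrywise_nonneg A"
    and top: "\<And>z. z \<bullet> (A *v z) \<le> lam * (z \<bullet> z)"
    and simple: "dim (eigenspace A lam) = 1"
    and "x \<noteq> 0" and x: "A *v x = lam *\<^sub>R x" and y: "A *v y = lam *\<^sub>R y"
  shows "0 \<le> y $ a * y $ b"
proof -
  define w where "w = (\<chi> k. \<bar>x $ k\<bar>)"
  have ww: "w \<bullet> w = x \<bullet> x" by (simp add: w_def inner_vec_def)
  then have "w \<noteq> 0" using \<open>x \<noteq> 0\<close> by auto
  have "lam * (w \<bullet> w) = x \<bullet> (A *v x)" by (simp add: ww x)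
  also have "\<dots> \<le> w \<bullet> (A *v w)" unfolding w_def by (rule quadratic_form_le_abs[OF nn])
  finally have "A *v w = lam *\<^sub>R w"
    by (intro symmetric_rayleigh_maximizer_eigenvector[of A UNIV]) (simp_all add: sym top)
  then have "w \<in> eigenspace A lam" and "y \<in> eigenspace A lam"
    using y by (simp_all add: mem_eigenspace_iff)
  then obtain c where "y = c *\<^sub>R w"
    using dim_one_subspace_parallel[OF subspace_eigenspace simple _ _ \<open>w \<noteq> 0\<close>] by blast
  then have "y $ a * y $ b = c\<^sup>2 * (\<bar>x $ a\<bar> * \<bar>x $ b\<bar>)"
    by (simp add: w_def power2_eq_square)
  then show ?thesis by simp
qed

lemma rank_one_update_spectral_decomp:
  fixes A :: "real^'n^'n"
  assumes dA: "psd_spectral_decomp A Y mu" and simple: "dim (eigenspace A lam) = 1"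
    and x: "A *v x = lam *\<^sub>R x" and "0 \<le> r"
  shows "psd_spectral_decomp (A + r *\<^sub>R outer x x) Y (\<lambda>i. mu i + r * (Y i \<bullet> x)\<^sup>2)"
proof -
  have Y: "orthonormal_family Y" and A: "A = spectral_sum Y mu" and "\<forall>i. 0 \<le> mu i"
    using dA by (auto simp: psd_spectral_decomp_iff)
  have eig: "A *v Y i = mu i *\<^sub>R Y i" for i by (rule psd_spectral_decomp_eigenvector(1)[OF dA])
  have "Y i \<bullet> x = 0 \<or> x = (Y i \<bullet> x) *\<^sub>R Y i" for i
  proof (cases "mu i = lam")
    case True
    have "Y i \<noteq> 0" using Y by (metis inner_zero_left orthonormal_family_def zero_neq_one)
    moreover have "x \<in> eigenspace A lam" and "Y i \<in> eigenspace A lam"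
      using x eig True by (simp_all add: mem_eigenspace_iff)
    ultimately obtain c where "x = c *\<^sub>R Y i"
      using dim_one_subspace_parallel[OF subspace_eigenspace simple] by blast
    moreover have "Y i \<bullet> Y i = 1" using Y by (simp add: orthonormal_family_def)
    ultimately show ?thesis by simp
  qed (use symmetric_eigenvectors_orthogonal[OF _ eig x] A symmetric_spectral_sum in auto)
  then have "(A + r *\<^sub>R outer x x) *v Y i = (mu i + r * (Y i \<bullet> x)\<^sup>2) *\<^sub>R Y i" for i
    using rank_one_update_eigenvector[OF eig] by blast
  then show ?thesis
    using Y \<open>\<forall>i. 0 \<le> mu i\<close> \<open>0 \<le> r\<close> matrix_eq_spectral_sum[OF Y]
    by (auto simp: psd_spectral_decomp_iff add_nonneg_nonneg)
qed

theorem theorem5p2: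
  fixes A :: "real^'n^'n" and lam1 r :: real and x1 :: "real^'n"
  assumes "doubly_nonneg A"
    and "is_eigenvalue A lam1"
    and "\<And>\<mu>. is_eigenvalue A \<mu> \<Longrightarrow> \<mu> \<le> lam1"
    and "dim (eigenspace A lam1) = 1"
    and "x1 \<noteq> 0" and "A *v x1 = lam1 *s x1"
    and "r > 0"
  shows "\<forall>t\<ge>0. entrywise_le (psd_rpow A t) (psd_rpow (A + r *\<^sub>R outer x1 x1) t)"
proof (intro allI impI)
  fix t :: real assume "t \<ge> 0"
  show "entrywise_le (psd_rpow A t) (psd_rpow (A + r *\<^sub>R outer x1 x1) t)"
  proof (cases "t = 0")
    case True
    then show ?thesis by (simp add: psd_rpow_def entrywise_le_def)
  next
    case False
    have sym: "symmetric_mat A" and nn: "entrywise_nonneg A" and "psd_mat A"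
      using assms(1) by (auto simp: doubly_nonneg_def)
    obtain Y mu where dA: "psd_spectral_decomp A Y mu"
      using psd_mat_spectral_decomp[OF \<open>psd_mat A\<close>] by blast
    have eig: "A *v Y i = mu i *\<^sub>R Y i" and mu_le: "mu i \<le> lam1" for i
      using psd_spectral_decomp_eigenvector[OF dA] assms(3) by auto
    have top: "z \<bullet> (A *v z) \<le> lam1 * (z \<bullet> z)" for z
      by (rule psd_spectral_decomp_quadratic_form_le[OF dA mu_le])
    have x1: "A *v x1 = lam1 *\<^sub>R x1" using assms(6) by (simp add: scalar_mult_eq_scaleR)
    show ?thesis
    proof (rule psd_rpow_entrywise_mono[OF dA rank_one_update_spectral_decomp[OF dA assms(4) x1]])
      fix i
      show "mu i = mu i + r * (Y i \<bullet> x1)\<^sup>2 \<or>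
          (mu i \<le> mu i + r * (Y i \<bullet> x1)\<^sup>2 \<and> (\<forall>a b. 0 \<le> Y i $ a * Y i $ b))"
      proof (cases "mu i = lam1")
        case True
        then show ?thesis using simple_top_eigenvector_sign_constant[OF sym nn top assms(4,5) x1]
          eig[of i] \<open>r > 0\<close> by simp
      qed (use symmetric_eigenvectors_orthogonal[OF sym eig x1] in auto)
    qed (use \<open>r > 0\<close> \<open>t \<ge> 0\<close> False in auto)
  qed
qed

end
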